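(* Let $\mathcal{H}$ be a finite hypothesis class of maps $\mathcal{X}\times\{-1,1\}\to\{-1,1\}$ containing the constant classifiers, let $\mathcal{D}_E$ be an empirical distribution over labeled examples $(\hat x,a,y)$, let $\gamma\ge0$, and let $\{(x_j,c_j^{-1},c_j^{+1})\}_{j=1}^n$ be a cost-sensitive classification instance with real costs. Then the FairCSC problem $$\min_{\pi\in\Delta(\mathcal{H})}\ \mathbb{E}_{h\sim\pi}\Big[\sum_{j=1}^n c_j^{h(x_j)}\Big]\quad\text{subject to}\quad |\Delta_{FPR}(\pi,\mathcal{D}_E)|\le\gamma$$ has an optimal solution that is a distribution over $\mathcal{H}$ with support size at most $2$.
   Context: $\Delta(\mathcal{H})$ is the set of probability distributions over $\mathcal{H}$. For $j\in\{-1,1\}$, $FPR_j(\pi,\mathcal{D}_E)=\mathbb{E}_{h\sim\pi}[\Pr_{(x,y)\sim\mathcal{D}_E}(h(x)=+1\mid a=j,y=-1)]$ with $x=(\hat x,a)$, and $\Delta_{FPR}(\pi,\mathcal{D}_E)=FPR_1(\pi,\mathcal{D}_E)-FPR_{-1}(\pi,\mathcal{D}_E)$ (assume $\mathcal{D}_E$ contains examples with $y=-1$ in each group so these rates are defined). *)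

theory Defs
  imports "HOL-Probability.Probability"
begin

(* Examples are triples (xhat, a, y) with a, y in {-1,1} (encoded as int).
   A hypothesis maps x = (xhat, a) to a label in {-1,1} (encoded as int). *)

type_synonym 'x hyp = "'x \<times> int \<Rightarrow> int"

definition cond_fp :: "('x \<times> int \<times> int) pmf \<Rightarrow> 'x hyp \<Rightarrow> int \<Rightarrow> real" where
  "cond_fp D h j =
     measure_pmf.prob D {(xh, a, y). h (xh, a) = 1 \<and> a = j \<and> y = -1}
     / measure_pmf.prob D {(xh, a, y). a = j \<and> y = -1}"

definition FPR :: "int \<Rightarrow> 'x hyp pmf \<Rightarrow> ('x \<times> int \<times> int) pmf \<Rightarrow> real" where
  "FPR j \<pi> D = measure_pmf.expectation \<pi> (\<lambda>h. cond_fp D h j)"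

definition Delta_FPR :: "'x hyp pmf \<Rightarrow> ('x \<times> int \<times> int) pmf \<Rightarrow> real" where
  "Delta_FPR \<pi> D = FPR 1 \<pi> D - FPR (-1) \<pi> D"

definition csc_cost :: "nat \<Rightarrow> (nat \<Rightarrow> 'x \<times> int) \<Rightarrow> (nat \<Rightarrow> real) \<Rightarrow> (nat \<Rightarrow> real)
                          \<Rightarrow> 'x hyp \<Rightarrow> real" where
  "csc_cost n xs cneg cpos h = (\<Sum>j<n. if h (xs j) = 1 then cpos j else cneg j)"

definition exp_cost :: "nat \<Rightarrow> (nat \<Rightarrow> 'x \<times> int) \<Rightarrow> (nat \<Rightarrow> real) \<Rightarrow> (nat \<Rightarrow> real)
                          \<Rightarrow> 'x hyp pmf \<Rightarrow> real" where
  "exp_cost n xs cneg cpos \<pi> = measure_pmf.expectation \<pi> (csc_cost n xs cneg cpos)"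

end

theory Submission
  imports Defs
begin

text \<open>
  The objective and \<open>Delta_FPR\<close> are expectations, under \<open>\<pi>\<close>, of two fixed real functions
  \<open>c\<close> and \<open>d\<close> on hypotheses, so a distribution only matters through the point
  \<open>(E d, E c)\<close>, which lies in the convex hull of the finitely many points \<open>(d h, c h)\<close>.
  Above the vertical line through \<open>E d\<close> the lower boundary of that hull is attained at a
  point or on a chord, so every finitely supported distribution is dominated by a mixture of two
  of its support points with the same \<open>E d\<close> and no larger \<open>E c\<close>. The feasible
  two-point mixtures form a finite union of compact one-parameter families, so the cost attains
  its minimum on them, and this minimiser is optimal among all feasible distributions.
\<close>

text \<open>
  Viewing \<open>(b h, a h)\<close> as points with weighted mean at the origin, some point on the axis
  \<open>b = 0\<close>, or some chord crossing it, lies on or below the origin.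
\<close>
lemma origin_above_point_or_chord:
  fixes w a b :: "'a \<Rightarrow> real"
  assumes "finite S" "S \<noteq> {}" "\<And>h. h \<in> S \<Longrightarrow> 0 < w h"
    and a_mean: "(\<Sum>h\<in>S. w h * a h) = 0" and b_mean: "(\<Sum>h\<in>S. w h * b h) = 0"
  shows "(\<exists>h\<in>S. b h = 0 \<and> a h \<le> 0)
       \<or> (\<exists>l\<in>S. \<exists>r\<in>S. b l < 0 \<and> 0 < b r \<and> a l * b r \<le> a r * b l)"
proof (rule ccontr)
  assume "\<not> ?thesis"
  then have E_pos: "\<And>h. h \<in> S \<Longrightarrow> b h = 0 \<Longrightarrow> 0 < a h"
    and chord_pos: "\<And>l r. l \<in> S \<Longrightarrow> r \<in> S \<Longrightarrow> b l < 0 \<Longrightarrow> 0 < b r \<Longrightarrow>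
                    a r * b l < a l * b r"
    by (auto simp: not_le)
  define L where "L = {h\<in>S. b h < 0}"
  define E where "E = {h\<in>S. b h = 0}"
  define R where "R = {h\<in>S. 0 < b h}"
  have fin: "finite L" "finite E" "finite R"
    using \<open>finite S\<close> by (auto simp: L_def E_def R_def)
  have sum_split: "sum f S = sum f L + sum f E + sum f R" for f :: "'a \<Rightarrow> real"
  proof -
    have "S = L \<union> E \<union> R" "L \<inter> E = {}" "(L \<union> E) \<inter> R = {}"
      by (auto simp: L_def E_def R_def)
    then show ?thesis using fin by (simp add: sum.union_disjoint)
  qed
  have w_pos: "\<And>h. h \<in> L \<or> h \<in> E \<or> h \<in> R \<Longrightarrow> 0 < w h"
    using assms(3) by (auto simp: L_def E_def R_def)
  have "(\<Sum>h\<in>E. w h * b h) = 0" by (simp add: E_def)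
  then have b_balance: "(\<Sum>h\<in>R. w h * b h) = - (\<Sum>h\<in>L. w h * b h)"
    using b_mean sum_split[of "\<lambda>h. w h * b h"] by simp
  have a_E: "0 \<le> (\<Sum>h\<in>E. w h * a h)"
    using w_pos E_pos by (intro sum_nonneg) (auto simp: E_def less_imp_le)
  show False
  proof (cases "L = {}")
    case True
    have "R = {}"
    proof (rule ccontr)
      assume "R \<noteq> {}"
      then have "0 < (\<Sum>h\<in>R. w h * b h)"
        using fin w_pos by (intro sum_pos) (auto simp: R_def)
      then show False using b_balance True by simp
    qed
    then have "E \<noteq> {}"
      using True \<open>S \<noteq> {}\<close> by (auto simp: L_def E_def R_def linorder_neq_iff)
    then have "0 < (\<Sum>h\<in>E. w h * a h)"
      using fin w_pos E_pos by (intro sum_pos) (auto simp: E_def)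
    then show False using a_mean sum_split[of "\<lambda>h. w h * a h"] True \<open>R = {}\<close> by simp
  next
    case False
    have "0 < (\<Sum>h\<in>L. w h * - b h)"
      using False fin w_pos by (intro sum_pos) (auto simp: L_def mult_pos_neg)
    then have Z_pos: "0 < (\<Sum>h\<in>R. w h * b h)"
      using b_balance by (simp add: sum_negf)
    then have "R \<noteq> {}" by auto
    have "0 < (\<Sum>l\<in>L. \<Sum>r\<in>R. (w l * w r) * (a l * b r - a r * b l))"
      using False \<open>R \<noteq> {}\<close> fin w_pos chord_pos
      by (intro sum_pos) (auto simp: L_def R_def)
    also have "\<dots> = (\<Sum>h\<in>L. w h * a h) * (\<Sum>h\<in>R. w h * b h)
                     - (\<Sum>h\<in>R. w h * a h) * (\<Sum>h\<in>L. w h * b h)"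
      by (simp add: sum_product sum_subtractf algebra_simps)
        (subst sum.swap, simp add: algebra_simps)
    also have "\<dots> = - (\<Sum>h\<in>E. w h * a h) * (\<Sum>h\<in>R. w h * b h)"
    proof -
      have a_L: "(\<Sum>h\<in>L. w h * a h) = - (\<Sum>h\<in>E. w h * a h) - (\<Sum>h\<in>R. w h * a h)"
        using a_mean sum_split[of "\<lambda>h. w h * a h"] by simp
      show ?thesis unfolding a_L b_balance by (simp add: algebra_simps)
    qed
    also have "\<dots> \<le> 0"
      using a_E Z_pos by (simp add: mult_nonneg_nonneg)
    finally show False by simp
  qed
qed

lemma expectation_finite_pmf:
  fixes f :: "'a \<Rightarrow> real"
  assumes "finite (set_pmf p)"
  shows "measure_pmf.expectation p f = (\<Sum>h\<in>set_pmf p. pmf p h * f h)"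
  using integral_measure_pmf[OF assms, of p f] by simp

lemma two_point_mixture_below_pmf:
  fixes d c :: "'a \<Rightarrow> real"
  assumes fin: "finite (set_pmf p)"
  shows "\<exists>l\<in>set_pmf p. \<exists>r\<in>set_pmf p. \<exists>t\<in>{0..1}.
           t * d l + (1 - t) * d r = measure_pmf.expectation p d
         \<and> t * c l + (1 - t) * c r \<le> measure_pmf.expectation p c"
proof -
  define D where "D = measure_pmf.expectation p d"
  define C where "C = measure_pmf.expectation p c"
  have centered: "(\<Sum>h\<in>set_pmf p. pmf p h * (f h - measure_pmf.expectation p f)) = 0"
    for f :: "'a \<Rightarrow> real"
    using sum_pmf_eq_1[OF fin order_refl]
    by (simp add: expectation_finite_pmf[OF fin] right_diff_distrib sum_subtractf
        flip: sum_distrib_right)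
  from origin_above_point_or_chord[OF fin set_pmf_not_empty pmf_positive centered centered]
  consider h where "h \<in> set_pmf p" "d h = D" "c h \<le> C"
    | l r where "l \<in> set_pmf p" "r \<in> set_pmf p" "d l < D" "D < d r"
        "(c l - C) * (d r - D) \<le> (c r - C) * (d l - D)"
    unfolding C_def D_def by fastforce
  then show ?thesis
  proof cases
    case 1
    then show ?thesis unfolding C_def D_def by (auto intro!: bexI[of _ h] bexI[of _ 1])
  next
    case 2
    define t where "t = (d r - D) / (d r - d l)"
    have "t \<in> {0..1}" using 2 by (auto simp: t_def field_simps)
    have t_scaled: "(d r - d l) * t = d r - D"
      using 2 by (simp add: t_def)
    then have d_mix: "t * d l + (1 - t) * d r = D"
      by (simp add: algebra_simps)
    have "(d r - d l) * (t * c l + (1 - t) * c r)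
          = ((d r - d l) * t) * (c l - c r) + (d r - d l) * c r"
      by (simp add: algebra_simps)
    also have "\<dots> = (d r - D) * c l + (D - d l) * c r"
      unfolding t_scaled by (simp add: algebra_simps)
    also have "\<dots> \<le> (d r - d l) * C"
      using 2 by (simp add: algebra_simps)
    finally have "t * c l + (1 - t) * c r \<le> C"
      using 2 by simp
    with d_mix \<open>t \<in> {0..1}\<close> show ?thesis
      using 2 unfolding C_def D_def by blast
  qed
qed

lemma exists_min_feasible_mixture:
  fixes d c :: "'a \<Rightarrow> real"
  assumes "finite H" "h0 \<in> H" "\<bar>d h0\<bar> \<le> \<gamma>"
  shows "\<exists>l\<in>H. \<exists>r\<in>H. \<exists>t\<in>{0..1}. \<bar>t * d l + (1 - t) * d r\<bar> \<le> \<gamma>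
           \<and> (\<forall>l'\<in>H. \<forall>r'\<in>H. \<forall>t'\<in>{0..1}. \<bar>t' * d l' + (1 - t') * d r'\<bar> \<le> \<gamma>
                \<longrightarrow> t * c l + (1 - t) * c r \<le> t' * c l' + (1 - t') * c r')"
proof -
  define T where "T l r = {0..1} \<inter> {t. \<bar>t * d l + (1 - t) * d r\<bar> \<le> \<gamma>}" for l r
  define V where "V = (\<Union>l\<in>H. \<Union>r\<in>H. (\<lambda>t. t * c l + (1 - t) * c r) ` T l r)"
  have "compact (T l r)" for l r
    unfolding T_def by (intro compact_Int_closed compact_Icc closed_Collect_le continuous_intros)
  then have "compact V"
    unfolding V_def using \<open>finite H\<close>
    by (intro compact_UN compact_continuous_image continuous_intros) auto
  have "1 \<in> T h0 h0" using assms(3) by (simp add: T_def)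
  then have "1 * c h0 + (1 - 1) * c h0 \<in> V" using assms(2) unfolding V_def by blast
  then have "V \<noteq> {}" by blast
  obtain v where "v \<in> V" and v_min: "\<forall>v'\<in>V. v \<le> v'"
    using compact_attains_inf[OF \<open>compact V\<close> \<open>V \<noteq> {}\<close>] by blast
  then obtain l r t where lrt: "l \<in> H" "r \<in> H" "t \<in> T l r" "v = t * c l + (1 - t) * c r"
    unfolding V_def by blast
  have "t * c l + (1 - t) * c r \<le> t' * c l' + (1 - t') * c r'"
    if "l' \<in> H" "r' \<in> H" "t' \<in> T l' r'" for l' r' t'
    using v_min that lrt(4) unfolding V_def by blast
  with lrt(1-3) show ?thesis
    unfolding T_def by blast
qed

definition mix_pmf :: "'a \<Rightarrow> 'a \<Rightarrow> real \<Rightarrow> 'a pmf" where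
  "mix_pmf l r t = map_pmf (\<lambda>b. if b then l else r) (bernoulli_pmf t)"

lemma set_pmf_mix_pmf_subset: "set_pmf (mix_pmf l r t) \<subseteq> {l, r}"
  unfolding mix_pmf_def by auto

lemma card_set_pmf_mix_pmf: "card (set_pmf (mix_pmf l r t)) \<le> 2"
proof -
  have "card (set_pmf (mix_pmf l r t)) \<le> card {l, r}"
    by (intro card_mono set_pmf_mix_pmf_subset) simp
  also have "\<dots> \<le> 2"
    by (simp add: card_insert_if)
  finally show ?thesis .
qed

lemma expectation_mix_pmf:
  fixes f :: "'a \<Rightarrow> real"
  assumes "t \<in> {0..1}"
  shows "measure_pmf.expectation (mix_pmf l r t) f = t * f l + (1 - t) * f r"
  using assms unfolding mix_pmf_def by (simp add: algebra_simps)

theorem exists_optimal_pmf_card_le_2: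
  fixes d c :: "'a \<Rightarrow> real"
  assumes "finite H" "h0 \<in> H" "\<bar>d h0\<bar> \<le> \<gamma>"
  shows "\<exists>\<pi>. set_pmf \<pi> \<subseteq> H \<and> card (set_pmf \<pi>) \<le> 2
           \<and> \<bar>measure_pmf.expectation \<pi> d\<bar> \<le> \<gamma>
           \<and> (\<forall>\<pi>'. set_pmf \<pi>' \<subseteq> H \<and> \<bar>measure_pmf.expectation \<pi>' d\<bar> \<le> \<gamma>
                  \<longrightarrow> measure_pmf.expectation \<pi> c \<le> measure_pmf.expectation \<pi>' c)"
proof -
  obtain l r t where lrt: "l \<in> H" "r \<in> H" "t \<in> {0..1}" "\<bar>t * d l + (1 - t) * d r\<bar> \<le> \<gamma>"
    and best: "\<And>l' r' t'. l' \<in> H \<Longrightarrow> r' \<in> H \<Longrightarrow> t' \<in> {0..1} \<Longrightarrow>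
                 \<bar>t' * d l' + (1 - t') * d r'\<bar> \<le> \<gamma> \<Longrightarrow>
                 t * c l + (1 - t) * c r \<le> t' * c l' + (1 - t') * c r'"
    using exists_min_feasible_mixture[where d = d and c = c, OF assms] by blast
  have "measure_pmf.expectation (mix_pmf l r t) c \<le> measure_pmf.expectation \<pi>' c"
    if "set_pmf \<pi>' \<subseteq> H" "\<bar>measure_pmf.expectation \<pi>' d\<bar> \<le> \<gamma>" for \<pi>'
  proof -
    have "finite (set_pmf \<pi>')" using that(1) \<open>finite H\<close> by (rule finite_subset)
    then obtain l' r' t' where "l' \<in> set_pmf \<pi>'" "r' \<in> set_pmf \<pi>'" "t' \<in> {0..1}"
      "t' * d l' + (1 - t') * d r' = measure_pmf.expectation \<pi>' d"
      "t' * c l' + (1 - t') * c r' \<le> measure_pmf.expectation \<pi>' c"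
      using two_point_mixture_below_pmf by blast
    moreover have "l' \<in> H" "r' \<in> H" using that(1) calculation(1,2) by blast+
    ultimately show ?thesis
      using best[of l' r' t'] that(2) lrt(3) by (simp add: expectation_mix_pmf)
  qed
  moreover have "set_pmf (mix_pmf l r t) \<subseteq> H"
    using set_pmf_mix_pmf_subset[of l r t] lrt(1,2) by blast
  ultimately show ?thesis
    using card_set_pmf_mix_pmf lrt(3,4)
    by (auto simp: expectation_mix_pmf intro!: exI[of _ "mix_pmf l r t"])
qed

lemma Delta_FPR_eq_expectation:
  assumes "finite (set_pmf \<pi>)"
  shows "Delta_FPR \<pi> D = measure_pmf.expectation \<pi> (\<lambda>h. cond_fp D h 1 - cond_fp D h (-1))"
  unfolding Delta_FPR_def FPR_def
  by (rule Bochner_Integration.integral_diff[symmetric]; rule integrable_measure_pmf_finite[OF assms])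

lemma cond_fp_const_positive:
  assumes "\<And>xh. h (xh, j) = 1" "(xh, j, -1) \<in> set_pmf D"
  shows "cond_fp D h j = 1"
proof -
  have "{(xh, a, y). h (xh, a) = 1 \<and> a = j \<and> y = -1} = {(xh, a, y). a = j \<and> y = (-1::int)}"
    using assms(1) by auto
  moreover have "measure_pmf.prob D {(xh, a, y). a = j \<and> y = (-1::int)} \<noteq> 0"
    unfolding measure_pmf_zero_iff using assms(2) by blast
  ultimately show ?thesis
    unfolding cond_fp_def by simp
qed

theorem lemma1:
  fixes H :: "'x hyp set"
    and M :: "('x \<times> int \<times> int) multiset"
    and \<gamma> :: real
    and n :: nat
    and xs :: "nat \<Rightarrow> 'x \<times> int"
    and cneg cpos :: "nat \<Rightarrow> real"
  assumes "finite H"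
    and "\<forall>h\<in>H. \<forall>xh a. a \<in> {-1, 1} \<longrightarrow> h (xh, a) \<in> {-1, 1}"
    and "\<exists>h\<in>H. \<forall>xh a. a \<in> {-1, 1} \<longrightarrow> h (xh, a) = 1"
    and "\<exists>h\<in>H. \<forall>xh a. a \<in> {-1, 1} \<longrightarrow> h (xh, a) = -1"
    and "M \<noteq> {#}"
    and "\<forall>(xh, a, y) \<in> set_mset M. a \<in> {-1, 1} \<and> y \<in> {-1, 1}"
    and "\<forall>j \<in> {-1, 1::int}. \<exists>xh. (xh, j, -1) \<in># M"
    and "\<gamma> \<ge> 0"
    and "\<forall>j<n. snd (xs j) \<in> {-1, 1}"
  shows "\<exists>\<pi>. set_pmf \<pi> \<subseteq> H \<and> card (set_pmf \<pi>) \<le> 2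
           \<and> \<bar>Delta_FPR \<pi> (pmf_of_multiset M)\<bar> \<le> \<gamma>
           \<and> (\<forall>\<pi>'. set_pmf \<pi>' \<subseteq> H \<and> \<bar>Delta_FPR \<pi>' (pmf_of_multiset M)\<bar> \<le> \<gamma>
                  \<longrightarrow> exp_cost n xs cneg cpos \<pi> \<le> exp_cost n xs cneg cpos \<pi>')"
proof -
  define D where "D = pmf_of_multiset M"
  define d where "d h = cond_fp D h 1 - cond_fp D h (-1)" for h
  \<comment> \<open>Of the hypotheses only the constant \<open>+1\<close> classifier and the nonempty negative groups
    matter: that classifier has false-positive rate 1 in both groups, hence is feasible.\<close>
  obtain h1 where "h1 \<in> H" and h1: "\<And>xh a. a \<in> {-1, 1} \<Longrightarrow> h1 (xh, a) = 1"
    using assms(3) by blast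
  have "cond_fp D h1 j = 1" if j: "j \<in> {-1, 1}" for j
  proof -
    obtain xh where "(xh, j, -1) \<in># M" using bspec[OF assms(7) j] by blast
    then show ?thesis
      using h1 j assms(5) by (intro cond_fp_const_positive) (auto simp: D_def)
  qed
  then have "\<bar>d h1\<bar> \<le> \<gamma>" using assms(8) by (simp add: d_def)
  have Delta_FPR_eq_d: "Delta_FPR \<pi> D = measure_pmf.expectation \<pi> d" if "set_pmf \<pi> \<subseteq> H" for \<pi>
    using Delta_FPR_eq_expectation finite_subset[OF that assms(1)] by (simp add: d_def[abs_def])
  show ?thesis
    using exists_optimal_pmf_card_le_2[where d = d and c = "csc_cost n xs cneg cpos",
        OF assms(1) \<open>h1 \<in> H\<close> \<open>\<bar>d h1\<bar> \<le> \<gamma>\<close>]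
    unfolding exp_cost_def D_def[symmetric] by (metis Delta_FPR_eq_d)
qed

end
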